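(* Let $A$ be a finite set of positive integers. Then $A$ is relatively prime if and only if there exists an $\mathcal{N}$-set $K \subseteq \mathbb{R}$ such that $A = (K-K)\cap \mathbb{N}$.
   Context: $\mathbb{N}$ denotes the set of positive integers. A set $A$ of integers is relatively prime if $A$ is nonempty and its elements have no common factor greater than $1$ (equivalently, $A$ generates the additive group $\mathbb{Z}$). For $K \subseteq \mathbb{R}^n$, $K-K=\{x-y : x,y\in K\}$. An $\mathcal{N}$-set in $\mathbb{R}^n$ is a compact set $K\subseteq\mathbb{R}^n$ such that for every $x\in\mathbb{R}^n$ there exists $y\in K$ with $x-y\in\mathbb{Z}^n$. *)

theory Defs
  imports "HOL-Analysis.Analysis"
begin

definition rel_prime_set :: "int set \<Rightarrow> bool" where
  "rel_prime_set A \<longleftrightarrow> A \<noteq> {} \<and> (\<forall>d::int. d > 1 \<longrightarrow> \<not> (\<forall>a\<in>A. d dvd a))"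

definition N_set :: "real set \<Rightarrow> bool" where
  "N_set K \<longleftrightarrow> compact K \<and> (\<forall>x::real. \<exists>y\<in>K. x - y \<in> \<int>)"

definition diff_set :: "real set \<Rightarrow> real set" where
  "diff_set K = {x - y | x y. x \<in> K \<and> y \<in> K}"

end

theory Submission
  imports Defs "HOL-Computational_Algebra.Group_Closure"
begin

(* Proof plan.
   (=>) If A is relatively prime then Gcd A = 1 lies in the additive group generated by A,
   so -1 is a sum of terms +-a with a in A; padding with all of A and its negatives gives a
   list S of "steps" with sum_list S = -1 whose absolute values are exactly A.  Split [0,1]
   into length S + 1 consecutive closed pieces and lift the i-th piece by the i-th partial
   sum of S.  The resulting "staircase" is compact and meets every coset of Z, and since two
   pieces can only differ by an integer when they are adjacent (or are the two end pieces,
   whose contribution vanishes because the total step is -1), its positive integer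
   differences are exactly the |s|, i.e. A.
   (<=) If d > 1 divided every positive integer difference of an N-set K, then the
   translates of K by multiples of d and by non-multiples of d would split the real line
   into two disjoint nonempty closed sets, contradicting its connectedness. *)

section \<open>Necessity: the integer differences of an N-set have no common divisor\<close>

lemma diff_setI: "u \<in> K \<Longrightarrow> v \<in> K \<Longrightarrow> u - v \<in> diff_set K"
  unfolding diff_set_def by blast

lemma closed_integer_translates:
  fixes K :: "real set" and W :: "int set"
  assumes "compact K"
  shows "closed {real_of_int w + y | w y. w \<in> W \<and> y \<in> K}"
proof -
  have "{real_of_int w + y | w y. w \<in> W \<and> y \<in> K} = (\<Union>x\<in>of_int ` W. \<Union>y\<in>K. {x + y})"
    by blast
  then show ?thesis using closed_compact_sums[OF closed_of_int_image assms] by simp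
qed

text \<open>A difference set is symmetric, so divisibility of its positive integer elements
  passes to all of its integer elements.\<close>
lemma diff_set_int_dvd:
  fixes d k :: int
  assumes dvd_pos: "\<And>n. n > 0 \<Longrightarrow> real_of_int n \<in> diff_set K \<Longrightarrow> d dvd n"
    and k: "real_of_int k \<in> diff_set K"
  shows "d dvd k"
proof -
  obtain u v where "real_of_int k = u - v" "u \<in> K" "v \<in> K"
    using k unfolding diff_set_def by blast
  then have "real_of_int (- k) \<in> diff_set K"
    using diff_setI[of v K u] by simp
  then show ?thesis
    using dvd_pos[of k] dvd_pos[of "- k"] k by (cases "k > 0"; cases "k = 0") auto
qed

lemma N_set_diff_not_dvd:
  fixes d :: int
  assumes N: "N_set K" and d: "d > 1"
  shows "\<exists>n>0. real_of_int n \<in> diff_set K \<and> \<not> d dvd n"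
proof (rule ccontr)
  assume "\<not> ?thesis"
  then have dvd_diff: "d dvd k" if "real_of_int k \<in> diff_set K" for k
    using diff_set_int_dvd[OF _ that] by blast
  have cK: "compact K" and cov: "\<And>x. \<exists>y\<in>K. x - y \<in> \<int>"
    using N unfolding N_set_def by auto
  define T where "T P = {real_of_int w + y | w y. P w \<and> y \<in> K}" for P :: "int \<Rightarrow> bool"
  have memT: "real_of_int w + y \<in> T P" if "P w" "y \<in> K" for P w y
    unfolding T_def using that by blast
  have closed: "closed (T P)" for P
    unfolding T_def using closed_integer_translates[OF cK, of "Collect P"] by simp
  have cover: "UNIV \<subseteq> T (\<lambda>w. d dvd w) \<union> T (\<lambda>w. \<not> d dvd w)"
  proof
    fix x :: real
    obtain y w where "y \<in> K" "x - y = of_int w" using cov by (metis Ints_cases)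
    then have "x = of_int w + y" "y \<in> K" by simp_all
    then show "x \<in> T (\<lambda>w. d dvd w) \<union> T (\<lambda>w. \<not> d dvd w)"
      using memT[of "\<lambda>w. d dvd w" w y] memT[of "\<lambda>w. \<not> d dvd w" w y] by blast
  qed
  have disjoint: "T (\<lambda>w. d dvd w) \<inter> T (\<lambda>w. \<not> d dvd w) = {}"
  proof (rule ccontr)
    assume "T (\<lambda>w. d dvd w) \<inter> T (\<lambda>w. \<not> d dvd w) \<noteq> {}"
    then obtain w1 w2 y1 y2 where "d dvd w1" "\<not> d dvd w2" "y1 \<in> K" "y2 \<in> K"
      and eq: "of_int w1 + y1 = of_int w2 + (y2 :: real)"
      unfolding T_def by blast
    then have "real_of_int (w2 - w1) = y1 - y2" by (simp add: algebra_simps)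
    then have "real_of_int (w2 - w1) \<in> diff_set K"
      using diff_setI[OF \<open>y1 \<in> K\<close> \<open>y2 \<in> K\<close>] by simp
    then have "d dvd w2 - w1" by (rule dvd_diff)
    then show False using \<open>d dvd w1\<close> \<open>\<not> d dvd w2\<close> by (metis dvd_add diff_add_cancel)
  qed
  obtain y where y: "y \<in> K" using cov by blast
  have "real_of_int 0 + y \<in> T (\<lambda>w. d dvd w)" using y by (intro memT) simp_all
  then have ne0: "T (\<lambda>w. d dvd w) \<inter> UNIV \<noteq> {}" by blast
  have "real_of_int 1 + y \<in> T (\<lambda>w. \<not> d dvd w)"
    using y d by (intro memT) (simp_all add: zdvd_not_zless)
  then have ne1: "T (\<lambda>w. \<not> d dvd w) \<inter> UNIV \<noteq> {}" by blast
  have "\<not> connected (UNIV :: real set)"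
    unfolding connected_closed not_not
    by (intro exI[of _ "T (\<lambda>w. d dvd w)"] exI[of _ "T (\<lambda>w. \<not> d dvd w)"])
      (use closed cover disjoint ne0 ne1 in auto)
  then show False using connected_UNIV by blast
qed

section \<open>Sufficiency: the staircase construction\<close>

definition piece :: "nat \<Rightarrow> nat \<Rightarrow> real set" where
  "piece N i = {real i / real (Suc N) .. real (Suc i) / real (Suc N)}"

definition staircase :: "(nat \<Rightarrow> int) \<Rightarrow> nat \<Rightarrow> real set" where
  "staircase c N = (\<Union>i\<le>N. (+) (real_of_int (c i)) ` piece N i)"

lemma piece_scaled:
  "y \<in> piece N i \<longleftrightarrow> real i \<le> y * real (Suc N) \<and> y * real (Suc N) \<le> real i + 1"
  unfolding piece_def by (auto simp: field_simps)

lemma mem_staircase: "i \<le> N \<Longrightarrow> y \<in> piece N i \<Longrightarrow> real_of_int (c i) + y \<in> staircase c N"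
  unfolding staircase_def by blast

text \<open>Every staircase is an N-set: its pieces cover [0,1] up to integer translation.\<close>
lemma N_set_staircase: "N_set (staircase c N)"
  unfolding N_set_def
proof (intro conjI allI)
  show "compact (staircase c N)"
    unfolding staircase_def piece_def by (intro compact_UN compact_translation) auto
next
  fix x :: real
  define m where "m = real (Suc N)"
  define i where "i = nat \<lfloor>frac x * m\<rfloor>"
  have m: "m > 0" unfolding m_def by simp
  have "real i \<le> frac x * m" "frac x * m < real i + 1"
    unfolding i_def using m by (auto simp: frac_ge_0)
  moreover have "frac x * m < m" using m by (simp add: frac_lt_1)
  ultimately have "i \<le> N" "frac x \<in> piece N i"
    unfolding piece_scaled m_def by linarith+
  then have "real_of_int (c i) + frac x \<in> staircase c N" by (rule mem_staircase)
  moreover have "x - (real_of_int (c i) + frac x) \<in> \<int>" unfolding frac_def by simp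
  ultimately show "\<exists>y\<in>staircase c N. x - y \<in> \<int>" by blast
qed

lemma int_mult_near:
  fixes z M a :: int
  assumes "M \<ge> 1" "a - 1 \<le> z * M" "z * M \<le> a + 1" "- (M - 1) \<le> a" "a \<le> M - 1"
  shows "(z = 0 \<and> \<bar>a\<bar> \<le> 1) \<or> (z = 1 \<and> a = M - 1) \<or> (z = -1 \<and> a = - (M - 1))"
proof -
  consider "z \<ge> 2" | "z \<le> -2" | "z = -1" | "z = 0" | "z = 1" by linarith
  then show ?thesis
  proof cases
    case 1
    then have "z * M \<ge> 2 * M" using assms(1) by (intro mult_right_mono) auto
    then show ?thesis using assms by linarith
  next
    case 2
    then have "z * M \<le> (-2) * M" using assms(1) by (intro mult_right_mono) auto
    then show ?thesis using assms by linarith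
  qed (use assms in auto)
qed

lemma piece_int_difference:
  fixes z :: int
  assumes "i \<le> N" "j \<le> N" "x \<in> piece N i" "y \<in> piece N j" "y - x = real_of_int z"
  shows "(z = 0 \<and> \<bar>int j - int i\<bar> \<le> 1) \<or> (z = 1 \<and> i = 0 \<and> j = N) \<or> (z = -1 \<and> i = N \<and> j = 0)"
proof -
  define M where "M = int (Suc N)"
  have "real_of_int (z * M) = y * real (Suc N) - x * real (Suc N)"
    unfolding M_def by (simp add: assms(5)[symmetric] algebra_simps)
  then have "int j - int i - 1 \<le> z * M" "z * M \<le> int j - int i + 1"
    using assms(3,4) unfolding piece_scaled by linarith+
  then have "(z = 0 \<and> \<bar>int j - int i\<bar> \<le> 1) \<or> (z = 1 \<and> int j - int i = M - 1)
      \<or> (z = -1 \<and> int j - int i = - (M - 1))"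
    using int_mult_near[of M] assms(1,2) unfolding M_def by simp
  then show ?thesis using assms(1,2) unfolding M_def by auto
qed

lemma staircase_int_diffs:
  fixes k :: int
  shows "real_of_int k \<in> diff_set (staircase c N) \<longleftrightarrow>
    k = 0 \<or> (\<exists>i<N. k = c (Suc i) - c i \<or> k = c i - c (Suc i))
      \<or> k = c N - c 0 + 1 \<or> k = c 0 - c N - 1"
    (is "?diff \<longleftrightarrow> ?values")
proof
  assume ?diff
  then obtain u v where uv: "real_of_int k = u - v" "u \<in> staircase c N" "v \<in> staircase c N"
    unfolding diff_set_def by blast
  obtain j y where j: "j \<le> N" "y \<in> piece N j" "u = real_of_int (c j) + y"
    using uv(2) unfolding staircase_def by blast
  obtain i x where i: "i \<le> N" "x \<in> piece N i" "v = real_of_int (c i) + x"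
    using uv(3) unfolding staircase_def by blast
  define z where "z = k - (c j - c i)"
  have k: "k = z + (c j - c i)" unfolding z_def by simp
  have "y - x = real_of_int z" unfolding z_def using uv(1) i(3) j(3) by simp
  from piece_int_difference[OF i(1) j(1) i(2) j(2) this]
  consider "z = 0" "j = i" | "z = 0" "j = Suc i" | "z = 0" "i = Suc j"
    | "z = 1" "i = 0" "j = N" | "z = -1" "i = N" "j = 0"
    by linarith
  then show ?values
  proof cases
    case 2
    then show ?thesis using k j(1) by (intro disjI2 disjI1 exI[of _ i]) auto
  next
    case 3
    then show ?thesis using k i(1) by (intro disjI2 disjI1 exI[of _ j]) auto
  qed (use k in auto)
next
  have ends: "0 \<in> piece N 0" "1 \<in> piece N N" unfolding piece_def by auto
  assume ?values
  then consider "k = 0" | i where "i < N" "k = c (Suc i) - c i \<or> k = c i - c (Suc i)"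
    | "k = c N - c 0 + 1" | "k = c 0 - c N - 1" by blast
  then show ?diff
  proof cases
    case 1
    then show ?thesis using diff_setI[OF mem_staircase mem_staircase, OF _ ends(1) _ ends(1)] by simp
  next
    case (2 i)
    define p where "p = real (Suc i) / real (Suc N)"
    have "p \<in> piece N i" "p \<in> piece N (Suc i)"
      unfolding p_def piece_def by (auto simp: field_simps)
    then have "real_of_int (c i) + p \<in> staircase c N" "real_of_int (c (Suc i)) + p \<in> staircase c N"
      using 2 by (auto intro: mem_staircase)
    then show ?thesis using 2 diff_setI by fastforce
  next
    case 3
    then have k_eq: "real_of_int k = (real_of_int (c N) + 1) - (real_of_int (c 0) + 0)" by simp
    show ?thesis
      unfolding k_eq by (rule diff_setI[OF mem_staircase mem_staircase, OF _ ends(2) _ ends(1)]) simp_all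
  next
    case 4
    then have k_eq: "real_of_int k = (real_of_int (c 0) + 0) - (real_of_int (c N) + 1)" by simp
    show ?thesis
      unfolding k_eq by (rule diff_setI[OF mem_staircase mem_staircase, OF _ ends(1) _ ends(2)]) simp_all
  qed
qed

text \<open>Heights given by the partial sums of a list of steps with total -1: then the
  wrap-around values vanish and the positive integer differences are the nonzero \<bar>s\<bar>.\<close>
lemma staircase_steps_pos_diffs:
  fixes S :: "int list"
  assumes "sum_list S = -1"
  shows "{n. n > 0 \<and> real_of_int n \<in> diff_set (staircase (\<lambda>i. sum_list (take i S)) (length S))}
    = {\<bar>s\<bar> | s. s \<in> set S \<and> s \<noteq> 0}"
proof -
  define c where "c = (\<lambda>i. sum_list (take i S))"
  have step: "c (Suc i) - c i = S ! i" if "i < length S" for i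
    using that unfolding c_def by (simp add: take_Suc_conv_app_nth)
  have ends: "c 0 = 0" "c (length S) = -1" unfolding c_def using assms by simp_all
  have diffs: "real_of_int n \<in> diff_set (staircase c (length S)) \<longleftrightarrow>
      n = 0 \<or> (\<exists>s\<in>set S. n = s \<or> n = - s)" for n :: int
  proof -
    have "(\<exists>i<length S. n = c (Suc i) - c i \<or> n = c i - c (Suc i))
        \<longleftrightarrow> (\<exists>i<length S. n = S ! i \<or> n = - (S ! i))"
      using step by (metis minus_diff_eq)
    also have "\<dots> \<longleftrightarrow> (\<exists>s\<in>set S. n = s \<or> n = - s)"
      by (metis in_set_conv_nth)
    finally show ?thesis unfolding staircase_int_diffs ends by auto
  qed
  show ?thesis
    unfolding c_def[symmetric]
  proof (intro set_eqI iffI)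
    fix n assume "n \<in> {n. n > 0 \<and> real_of_int n \<in> diff_set (staircase c (length S))}"
    then obtain s where "n > 0" "s \<in> set S" "n = s \<or> n = - s" unfolding diffs by auto
    then have "n = \<bar>s\<bar>" "s \<noteq> 0" by auto
    then show "n \<in> {\<bar>s\<bar> | s. s \<in> set S \<and> s \<noteq> 0}" using \<open>s \<in> set S\<close> by blast
  next
    fix n assume "n \<in> {\<bar>s\<bar> | s. s \<in> set S \<and> s \<noteq> 0}"
    then obtain s where "s \<in> set S" "s \<noteq> 0" "n = \<bar>s\<bar>" by blast
    then have "n > 0" "n = s \<or> n = - s" by auto
    then show "n \<in> {n. n > 0 \<and> real_of_int n \<in> diff_set (staircase c (length S))}"
      unfolding diffs using \<open>s \<in> set S\<close> by blast
  qed
qed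

lemma sum_list_map_uminus: "sum_list (map uminus xs) = - sum_list (xs :: int list)"
  using uminus_sum_list_map[of id xs] by simp

lemma group_closure_sum_list:
  fixes s :: int
  assumes "s \<in> group_closure A"
  shows "\<exists>L. set L \<subseteq> A \<union> uminus ` A \<and> sum_list L = s"
  using assms
proof induction
  case (base s)
  show ?case
  proof (cases "s = 0")
    case True
    then show ?thesis by (intro exI[of _ "[]"]) simp
  next
    case False
    then show ?thesis using base by (intro exI[of _ "[s]"]) auto
  qed
next
  case (diff s t)
  then obtain L M where "set L \<subseteq> A \<union> uminus ` A" "sum_list L = s"
    "set M \<subseteq> A \<union> uminus ` A" "sum_list M = t" by blast
  then show ?case
    by (intro exI[of _ "L @ map uminus M"]) (force simp: sum_list_map_uminus)
qed

lemma rel_prime_set_Gcd: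
  fixes A :: "int set"
  assumes "rel_prime_set A"
  shows "Gcd A = 1"
proof -
  have ne: "A \<noteq> {}" and no_common: "\<And>d. d > 1 \<Longrightarrow> \<exists>a\<in>A. \<not> d dvd a"
    using assms unfolding rel_prime_set_def by auto
  have "Gcd A \<noteq> 0"
  proof
    assume "Gcd A = 0"
    then have "A \<subseteq> {0}" by (auto dest: Gcd_dvd)
    then show False using no_common[of 2] ne by auto
  qed
  moreover have "\<not> Gcd A > 1" using no_common[of "Gcd A"] by (auto intro: Gcd_dvd)
  ultimately show ?thesis using Gcd_int_greater_eq_0[of A] by linarith
qed

lemma rel_prime_steps:
  fixes A :: "int set"
  assumes "finite A" "\<forall>a\<in>A. a > 0" "rel_prime_set A"
  shows "\<exists>S. sum_list S = -1 \<and> {\<bar>s\<bar> | s. s \<in> set S \<and> s \<noteq> 0} = A"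
proof -
  have "-1 \<in> group_closure A"
    using Gcd_in_group_closure[of A] rel_prime_set_Gcd[OF assms(3)] by simp
  then obtain L where L: "set L \<subseteq> A \<union> uminus ` A" "sum_list L = -1"
    using group_closure_sum_list by blast
  define As where "As = sorted_list_of_set A"
  have As: "set As = A" unfolding As_def using assms(1) by simp
  define S where "S = As @ map uminus As @ L"
  have "sum_list S = -1" unfolding S_def using L(2) by (simp add: sum_list_map_uminus)
  moreover have "{\<bar>s\<bar> | s. s \<in> set S \<and> s \<noteq> 0} = A"
  proof
    have "set S \<subseteq> A \<union> uminus ` A" unfolding S_def using As L(1) by auto
    then show "{\<bar>s\<bar> | s. s \<in> set S \<and> s \<noteq> 0} \<subseteq> A" using assms(2) by force
    show "A \<subseteq> {\<bar>s\<bar> | s. s \<in> set S \<and> s \<noteq> 0}"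
    proof
      fix a assume "a \<in> A"
      then have "a \<in> set S" "a \<noteq> 0" "\<bar>a\<bar> = a" unfolding S_def using As assms(2) by auto
      then show "a \<in> {\<bar>s\<bar> | s. s \<in> set S \<and> s \<noteq> 0}" by force
    qed
  qed
  ultimately show ?thesis by blast
qed

theorem theorem1:
  fixes A :: "int set"
  assumes "finite A" and "\<forall>a\<in>A. a > 0"
  shows "rel_prime_set A \<longleftrightarrow>
    (\<exists>K::real set. N_set K \<and> A = {n::int. n > 0 \<and> real_of_int n \<in> diff_set K})"
proof
  assume "rel_prime_set A"
  then obtain S where sum: "sum_list S = -1"
    and steps: "{\<bar>s\<bar> | s. s \<in> set S \<and> s \<noteq> 0} = A"
    using rel_prime_steps[OF assms] by blast
  let ?K = "staircase (\<lambda>i. sum_list (take i S)) (length S)"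
  have "A = {n. n > 0 \<and> real_of_int n \<in> diff_set ?K}"
    using staircase_steps_pos_diffs[OF sum] steps by (rule trans[THEN sym])
  then show "\<exists>K. N_set K \<and> A = {n. n > 0 \<and> real_of_int n \<in> diff_set K}"
    by (intro exI[of _ ?K] conjI N_set_staircase)
next
  assume "\<exists>K. N_set K \<and> A = {n. n > 0 \<and> real_of_int n \<in> diff_set K}"
  then obtain K where K: "N_set K" and A: "A = {n. n > 0 \<and> real_of_int n \<in> diff_set K}"
    by blast
  have no_common: "\<exists>a\<in>A. \<not> d dvd a" if "d > 1" for d :: int
    using N_set_diff_not_dvd[OF K that] unfolding A by blast
  have "A \<noteq> {}" using no_common[of 2] by auto
  then show "rel_prime_set A"
    unfolding rel_prime_set_def using no_common by blast
qed

end
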